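(* Let $q\in(0,1]$, $\eta\in(0,1]$, $R_0^*>0$, $m_1>0$. Assume [A12]: (i) for every $T\in\mathbb T$, $\mathbb H_T$ is almost surely thrice differentiable in $\theta$ on $B^*=\{\theta\in\Theta:|\theta-\theta^*|<R_0^*\}$; (ii) $\sup_{T}E[\|a_T\|^{m_1}|\partial_\theta\mathbb H_T(\theta^* )|^{m_1}]<\infty$; (iii) $\sup_{T}E[\|a_T\|^{2m_1}\sup_{\theta\in B^*}|\partial_\theta^2\mathbb H_T(\theta)|^{m_1}]<\infty$; (iv) $\sup_{T}E[\|a_T\|^{2m_1}\sup_{\theta\in B^*}|\partial_\theta^3\mathbb H_T(\theta)|^{m_1}]<\infty$ (suprema over $T\in\mathbb T$). Then for every $m_2>0$ there exist constants $R_0>0$ and $K>0$ such that $$c_T\Bigl(\frac{m_1m_2}{qm_1+m_2},R_0\Bigr)\le K\|a_T\|^{-\frac{\eta(2-q)m_1m_2}{qm_1+m_2}}\bigl(E[\|G_T^{(00)}\|^{m_2}]\bigr)^{\frac{qm_1}{qm_1+m_2}}$$ for every $T\in\mathbb T$ with $\|a_T\|\le1$.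
   Context: Let $\Theta\subset\mathbb R^{\mathsf p}$ be a bounded open set with closure $\overline\Theta$ and $\theta^*\in\Theta$. Let $(\Omega,\mathcal F,P)$ be a probability space, $\mathbb T\subset\mathbb R_{\ge0}$ with $\sup\mathbb T=\infty$. For each $T\in\mathbb T$, $\mathbb H_T:\Omega\times\overline\Theta\to\mathbb R$ is a random field continuous in $\theta$ for every $\omega$; $\partial_\theta^k\mathbb H_T$ denotes its $k$-th derivative tensor. Penalty weights $\xi_T^j>0$ ($j=1,\dots,\mathsf p$) are (possibly random). $\mathcal J^{(0)}=\{j:\theta^*_j=0\}$, $\mathcal J^{(1)}=\{j:\theta^*_j\ne0\}$; $A^{(00)}=(A_{ij})_{i,j\in\mathcal J^{(0)}}$. $a_T=\mathrm{diag}(\alpha_T^1,\dots,\alpha_T^{\mathsf p})$ is deterministic, invertible, with $\|a_T\|\to0$ ($\|\cdot\|$ spectral norm); $\mathbb U_T=\{u:\theta^*+a_Tu\in\overline\Theta\}$. $\tilde a_T$ is diagonal with $(\tilde a_T)_{jj}=(\xi_T^j)^{-1/q}$ for $j\in\mathcal J^{(0)}$ and $\alpha_T^j$ for $j\in\mathcal J^{(1)}$; $G_T=a_T^{-1}\tilde a_T$. For $R>0$, $\mathsf c_{T,R}=\sup\frac{|\mathbb H_T(\theta^*+a_Tu)-\mathbb H_T(\theta^*+a_Tv)|}{|u-v|^q}$ over $u,v\in\mathbb U_T$, $u\ne v$, $|a_Tu|,|a_Tv|<R\|a_T\|^{1-\eta}$; for $m>0$, $c_T(m,R)=E[|\mathsf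 c_{T,R}|^{m}\|G_T^{(00)}\|^{qm}]$ (possibly $\infty$). *)

theory Defs
  imports "HOL-Probability.Probability"
begin

definition diagm :: "('p::finite \<Rightarrow> real) \<Rightarrow> real^'p^'p" where
  "diagm d = (\<chi> i j. if i = j then d i else 0)"

definition specnorm :: "real^'p::finite^'p \<Rightarrow> real" where
  "specnorm M = onorm (\<lambda>x. M *v x)"

text \<open>Principal submatrix indexed by J, embedded by zero padding
  (has the same spectral norm as the submatrix itself).\<close>
definition subblock :: "'p::finite set \<Rightarrow> real^'p^'p \<Rightarrow> real^'p^'p" where
  "subblock J M = (\<chi> i j. if i \<in> J \<and> j \<in> J then M $ i $ j else 0)"

text \<open>Real power of an extended nonnegative real (used for positive exponents).\<close>
definition ennpow :: "ennreal \<Rightarrow> real \<Rightarrow> ennreal" where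
  "ennpow x r = (if x = \<top> then \<top> else ennreal (enn2real x powr r))"

definition pd :: "'p::finite \<Rightarrow> (real^'p \<Rightarrow> real) \<Rightarrow> real^'p \<Rightarrow> real" where
  "pd i f \<theta> = deriv (\<lambda>t. f (\<theta> + t *\<^sub>R axis i 1)) 0"

definition thrice_diff_on :: "(real^'p::finite \<Rightarrow> real) \<Rightarrow> (real^'p) set \<Rightarrow> bool" where
  "thrice_diff_on f S \<longleftrightarrow>
     (\<forall>\<theta>\<in>S. f differentiable (at \<theta>)) \<and>
     (\<forall>i. \<forall>\<theta>\<in>S. pd i f differentiable (at \<theta>)) \<and>
     (\<forall>i j. \<forall>\<theta>\<in>S. pd j (pd i f) differentiable (at \<theta>))"

definition dnorm1 :: "(real^'p::finite \<Rightarrow> real) \<Rightarrow> real^'p \<Rightarrow> real" where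
  "dnorm1 f \<theta> = sqrt (\<Sum>i\<in>UNIV. (pd i f \<theta>)\<^sup>2)"

definition dnorm2 :: "(real^'p::finite \<Rightarrow> real) \<Rightarrow> real^'p \<Rightarrow> real" where
  "dnorm2 f \<theta> = sqrt (\<Sum>i\<in>UNIV. \<Sum>j\<in>UNIV. (pd j (pd i f) \<theta>)\<^sup>2)"

definition dnorm3 :: "(real^'p::finite \<Rightarrow> real) \<Rightarrow> real^'p \<Rightarrow> real" where
  "dnorm3 f \<theta> = sqrt (\<Sum>i\<in>UNIV. \<Sum>j\<in>UNIV. \<Sum>k\<in>UNIV. (pd k (pd j (pd i f)) \<theta>)\<^sup>2)"

text \<open>Hoelder-type constant c_{T,R}(omega) (value in [0,\<infinity>]).
  Arguments: field h (= H_T(omega,.)), Theta, theta*, diagonal of a_T, q, eta, R.\<close>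
definition holder_const ::
  "(real^'p::finite \<Rightarrow> real) \<Rightarrow> (real^'p) set \<Rightarrow> real^'p \<Rightarrow> ('p \<Rightarrow> real)
     \<Rightarrow> real \<Rightarrow> real \<Rightarrow> real \<Rightarrow> ennreal" where
  "holder_const h Th ths al q eta R =
     (let A = diagm al; nA = specnorm A;
          U = {u. ths + A *v u \<in> closure Th} in
      SUP (u, v) \<in> {(u, v). u \<in> U \<and> v \<in> U \<and> u \<noteq> v \<and>
                      norm (A *v u) < R * nA powr (1 - eta) \<and>
                      norm (A *v v) < R * nA powr (1 - eta)}.
        ennreal (\<bar>h (ths + A *v u) - h (ths + A *v v)\<bar> / norm (u - v) powr q))"

text \<open>G_T^{(00)}(omega): the (J0,J0) block of a_T^{-1} tilde a_T.\<close>
definition G00 :: "real^'p::finite \<Rightarrow> ('p \<Rightarrow> real) \<Rightarrow> ('p \<Rightarrow> real) \<Rightarrow> real \<Rightarrow> real^'p^'p" where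
  "G00 ths al xi q =
     (let J0 = {j. ths $ j = 0};
          At = diagm (\<lambda>j. if j \<in> J0 then xi j powr (- 1 / q) else al j)
      in subblock J0 (matrix_inv (diagm al) ** At))"

end

theory Submission
  imports Defs
begin

(*
  Where H_T is smooth, the Hessian bound over B* shows that the gradient on the ball of radius
  rho = R0 |a_T|^(1 - eta) around theta* is at most |dH_T| at theta* plus a multiple of
  rho sup |d^2 H_T|, so u |-> H_T(theta* + a_T u) is Lipschitz there with |a_T| times that
  constant.  Interpolating between this Lipschitz bound and the trivial bound by the diameter
  2 rho gives
    c_{T,R0} <= C |a_T|^(-eta (2 - q)) (|a_T| |dH_T| + |a_T|^2 sup |d^2 H_T|).
  Hoelder's inequality with the conjugate weights m2/(q m1 + m2) and q m1/(q m1 + m2) splits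
  E[c^m |G^(00)|^(q m)] into powers of E[c^m1] and of E[|G^(00)|^m2], and conditions (ii) and
  (iii) of [A12] bound E[c^m1] uniformly in T.
*)

lemma diagm_mult: "diagm a ** diagm b = diagm (\<lambda>j. a j * b j)"
  unfolding diagm_def matrix_matrix_mult_def vec_eq_iff
  by (auto simp: if_distrib[of "\<lambda>x. x * _"] cong: if_cong)

lemma diagm_one: "diagm (\<lambda>j. 1) = mat 1"
  by (simp add: diagm_def mat_def)

lemma matrix_inv_diagm:
  assumes "\<forall>j. d j \<noteq> 0"
  shows "matrix_inv (diagm d) = diagm (\<lambda>j. inverse (d j))"
proof -
  let ?B = "diagm (\<lambda>j. inverse (d j))"
  have AB: "diagm d ** ?B = mat 1" "?B ** diagm d = mat 1"
    using assms by (simp_all add: diagm_mult diagm_one[symmetric])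
  show ?thesis unfolding matrix_inv_def
  proof (rule someI2[where a="?B"])
    fix A' assume "diagm d ** A' = mat 1 \<and> A' ** diagm d = mat 1"
    then have "A' = A' ** (diagm d ** ?B)" "A' ** diagm d = mat 1" using AB by auto
    then show "A' = ?B" by (metis matrix_mul_assoc matrix_mul_lid)
  qed (use AB in auto)
qed

lemma diagm_mult_vec_nth: "(diagm d *v x) $ i = d i * x $ i"
  unfolding diagm_def matrix_vector_mult_def
  by (auto simp: if_distrib[of "\<lambda>x. x * _"] cong: if_cong)

lemma specnorm_diagm: "specnorm (diagm d) = Max (range (\<lambda>j. \<bar>d j\<bar>))"
proof (rule antisym)
  let ?M = "Max (range (\<lambda>j. \<bar>d j\<bar>))"
  have M: "\<bar>d j\<bar> \<le> ?M" for j by simp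
  then have M0: "0 \<le> ?M" by (meson abs_ge_zero order_trans)
  show "specnorm (diagm d) \<le> ?M" unfolding specnorm_def
  proof (rule onorm_le)
    fix x :: "real^'a"
    have "(norm (diagm d *v x))\<^sup>2 = (\<Sum>i\<in>UNIV. (d i)\<^sup>2 * (x $ i)\<^sup>2)"
      by (simp add: norm_vec_def L2_set_def sum_nonneg diagm_mult_vec_nth power_mult_distrib)
    also have "\<dots> \<le> (\<Sum>i\<in>UNIV. ?M\<^sup>2 * (x $ i)\<^sup>2)"
      using M M0 by (intro sum_mono mult_right_mono) (auto simp: abs_le_square_iff[symmetric])
    also have "\<dots> = (?M * norm x)\<^sup>2"
      by (simp add: norm_vec_def L2_set_def sum_nonneg power_mult_distrib sum_distrib_left)
    finally show "norm (diagm d *v x) \<le> ?M * norm x"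
      by (rule power2_le_imp_le) (use M0 in simp)
  qed
  have "?M \<in> range (\<lambda>j. \<bar>d j\<bar>)" by (rule Max_in) auto
  then obtain j where j: "?M = \<bar>d j\<bar>" by blast
  have "diagm d *v axis j 1 = d j *\<^sub>R axis j 1"
    by (simp add: vec_eq_iff diagm_mult_vec_nth axis_def)
  then show "?M \<le> specnorm (diagm d)" unfolding specnorm_def
    using onorm[OF matrix_vector_mul_bounded_linear, of "diagm d" "axis j 1"] j by simp
qed

lemma specnorm_diagm_pos:
  assumes "\<forall>j. d j \<noteq> 0"
  shows "0 < specnorm (diagm d)"
proof -
  have "\<bar>d j\<bar> \<le> specnorm (diagm d)" for j
    unfolding specnorm_diagm by simp
  then show ?thesis
    using assms zero_less_abs_iff order_less_le_trans by metis
qed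

lemma norm_mult_vec_le_specnorm: "norm (M *v x) \<le> specnorm M * norm x"
  unfolding specnorm_def using onorm[OF matrix_vector_mul_bounded_linear] by blast

lemma G00_eq_diagm:
  assumes "\<forall>j. al j \<noteq> 0"
  shows "G00 ths al xi q = diagm (\<lambda>j. if ths $ j = 0 then xi j powr (- 1 / q) / al j else 0)"
proof -
  have "subblock J (diagm d) = diagm (\<lambda>j. if j \<in> J then d j else 0)" for J and d :: "'a \<Rightarrow> real"
    by (auto simp: subblock_def diagm_def vec_eq_iff)
  then show ?thesis unfolding G00_def Let_def using assms
    by (simp add: matrix_inv_diagm diagm_mult divide_inverse mult.commute cong: if_cong)
qed

lemma borel_measurable_specnorm_G00:
  fixes xi :: "'w \<Rightarrow> 'p::finite \<Rightarrow> real"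
  assumes "\<forall>j. al j \<noteq> 0" and [measurable]: "\<And>j. (\<lambda>\<omega>. xi \<omega> j) \<in> borel_measurable M"
  shows "(\<lambda>\<omega>. specnorm (G00 ths al (xi \<omega>) q)) \<in> borel_measurable M"
  unfolding G00_eq_diagm[OF assms(1)] specnorm_diagm
  by (intro borel_measurable_Max) measurable

section \<open>Partial derivatives and Lipschitz bounds\<close>

definition twice_diff_on :: "(real^'p::finite \<Rightarrow> real) \<Rightarrow> (real^'p) set \<Rightarrow> bool" where
  "twice_diff_on f S \<longleftrightarrow>
     (\<forall>\<theta>\<in>S. f differentiable (at \<theta>)) \<and> (\<forall>i. \<forall>\<theta>\<in>S. pd i f differentiable (at \<theta>))"

lemma thrice_diff_on_imp_twice_diff_on: "thrice_diff_on f S \<Longrightarrow> twice_diff_on f S"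
  by (simp add: thrice_diff_on_def twice_diff_on_def)

lemma twice_diff_on_subset: "twice_diff_on f S \<Longrightarrow> T \<subseteq> S \<Longrightarrow> twice_diff_on f T"
  by (auto simp: twice_diff_on_def)

lemma pd_const [simp]: "pd i (\<lambda>_. c) = (\<lambda>_. 0)"
  by (simp add: pd_def fun_eq_iff)

lemma thrice_diff_on_const [simp]: "thrice_diff_on (\<lambda>_. c) S"
  by (simp add: thrice_diff_on_def)

lemma has_field_derivative_pd:
  fixes f :: "real^'p::finite \<Rightarrow> real"
  assumes D: "(f has_derivative D) (at x)"
  shows "((\<lambda>t. f (x + t *\<^sub>R axis i 1)) has_field_derivative D (axis i 1)) (at 0)"
proof -
  have "((\<lambda>t. x + t *\<^sub>R axis i 1) has_derivative (\<lambda>t. t *\<^sub>R axis i 1)) (at 0)"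
    by (auto intro!: derivative_eq_intros)
  from diff_chain_at[OF this] D
  have "((\<lambda>t. f (x + t *\<^sub>R axis i 1)) has_derivative (\<lambda>t. D (t *\<^sub>R axis i 1))) (at 0)"
    by (simp add: comp_def)
  moreover have "(\<lambda>t. D (t *\<^sub>R axis i 1)) = (*) (D (axis i 1))"
    using has_derivative_linear[OF D] by (auto simp: fun_eq_iff linear_scale)
  ultimately show ?thesis by (simp add: has_field_derivative_def)
qed

lemma pd_eq_derivative:
  fixes f :: "real^'p::finite \<Rightarrow> real"
  shows "(f has_derivative D) (at x) \<Longrightarrow> pd i f x = D (axis i 1)"
  unfolding pd_def by (rule DERIV_imp_deriv[OF has_field_derivative_pd])

lemma differentiable_imp_has_field_derivative_pd:
  fixes f :: "real^'p::finite \<Rightarrow> real"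
  shows "f differentiable (at x) \<Longrightarrow> ((\<lambda>t. f (x + t *\<^sub>R axis i 1)) has_field_derivative pd i f x) (at 0)"
  unfolding differentiable_def using has_field_derivative_pd pd_eq_derivative by metis

lemma has_derivative_gradient:
  fixes f :: "real^'p::finite \<Rightarrow> real"
  assumes "f differentiable (at x)"
  shows "(f has_derivative (\<lambda>h. h \<bullet> (\<chi> i. pd i f x))) (at x)"
proof -
  obtain D where D: "(f has_derivative D) (at x)" using assms differentiable_def by blast
  have "D h = h \<bullet> (\<chi> i. pd i f x)" for h
  proof -
    have "D h = D (\<Sum>i\<in>UNIV. h $ i *\<^sub>R axis i 1)"
      using basis_expansion[of h] by (simp add: scalar_mult_eq_scaleR)
    also have "\<dots> = (\<Sum>i\<in>UNIV. h $ i * D (axis i 1))"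
      using has_derivative_linear[OF D] by (simp add: linear_sum linear_scale)
    finally show ?thesis by (simp add: pd_eq_derivative[OF D] inner_vec_def)
  qed
  then have "D = (\<lambda>h. h \<bullet> (\<chi> i. pd i f x))" by blast
  then show ?thesis using D by simp
qed

lemma dnorm1_nonneg [simp]: "0 \<le> dnorm1 f x"
  by (simp add: dnorm1_def sum_nonneg)

lemma dnorm2_nonneg [simp]: "0 \<le> dnorm2 f x"
  by (simp add: dnorm2_def sum_nonneg)

lemma dnorm1_eq_norm: "dnorm1 f x = norm (\<chi> i. pd i f x)"
  by (simp add: dnorm1_def norm_vec_def L2_set_def)

lemma dnorm1_pd_le_dnorm2: "dnorm1 (pd i f) x \<le> dnorm2 f x"
  unfolding dnorm1_def dnorm2_def
  by (intro real_sqrt_le_mono member_le_sum[where f="\<lambda>i. \<Sum>j\<in>UNIV. (pd j (pd i f) x)\<^sup>2"])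
     (auto intro: sum_nonneg)

lemma abs_diff_le_dnorm1_bound:
  fixes f :: "real^'p::finite \<Rightarrow> real"
  assumes "convex S" "\<forall>z\<in>S. f differentiable (at z)" "\<forall>z\<in>S. dnorm1 f z \<le> L"
    and "x \<in> S" "y \<in> S"
  shows "\<bar>f x - f y\<bar> \<le> L * norm (x - y)"
proof -
  have "norm (f x - f y) \<le> L * norm (x - y)"
  proof (rule differentiable_bound[OF assms(1) _ _ assms(4,5)])
    fix z assume z: "z \<in> S"
    then show "(f has_derivative (\<lambda>h. h \<bullet> (\<chi> i. pd i f z))) (at z within S)"
      using assms(2) has_derivative_gradient has_derivative_at_withinI by blast
    have "onorm (\<lambda>h. h \<bullet> (\<chi> i. pd i f z)) \<le> dnorm1 f z"
      by (rule onorm_le) (use Cauchy_Schwarz_ineq2 in \<open>simp add: dnorm1_eq_norm mult.commute\<close>)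
    then show "onorm (\<lambda>h. h \<bullet> (\<chi> i. pd i f z)) \<le> L"
      using z assms(3) by fastforce
  qed
  then show ?thesis by simp
qed

lemma norm_gradient_diff_le:
  fixes f :: "real^'p::finite \<Rightarrow> real"
  assumes "convex S" "twice_diff_on f S" "\<forall>z\<in>S. dnorm2 f z \<le> L" "x \<in> S" "y \<in> S"
  shows "norm ((\<chi> i. pd i f x) - (\<chi> i. pd i f y)) \<le> sqrt (real CARD('p)) * L * norm (x - y)"
proof -
  have L0: "0 \<le> L"
    using assms(3,4) dnorm2_nonneg order_trans by blast
  have "\<bar>pd i f x - pd i f y\<bar> \<le> L * norm (x - y)" for i
  proof (rule abs_diff_le_dnorm1_bound[OF assms(1) _ _ assms(4,5)])
    show "\<forall>z\<in>S. pd i f differentiable (at z)"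
      using assms(2) by (simp add: twice_diff_on_def)
    show "\<forall>z\<in>S. dnorm1 (pd i f) z \<le> L"
      using assms(3) dnorm1_pd_le_dnorm2 order_trans by blast
  qed
  then have pd_sq: "(pd i f x - pd i f y)\<^sup>2 \<le> (L * norm (x - y))\<^sup>2" for i
    using L0 by (simp add: abs_le_square_iff[symmetric])
  have "(norm ((\<chi> i. pd i f x) - (\<chi> i. pd i f y)))\<^sup>2 = (\<Sum>i\<in>UNIV. (pd i f x - pd i f y)\<^sup>2)"
    by (simp add: norm_vec_def L2_set_def sum_nonneg)
  also have "\<dots> \<le> (\<Sum>i\<in>(UNIV::'p set). (L * norm (x - y))\<^sup>2)"
    by (rule sum_mono) (rule pd_sq)
  also have "\<dots> = (sqrt (real CARD('p)) * L * norm (x - y))\<^sup>2"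
    by (simp add: power_mult_distrib)
  finally show ?thesis
    by (rule power2_le_imp_le) (use L0 in simp)
qed

lemma lipschitz_on_subball:
  fixes f :: "real^'p::finite \<Rightarrow> real"
  assumes f: "twice_diff_on f (ball c r)" and L: "\<forall>z\<in>ball c r. dnorm2 f z \<le> L"
    and \<rho>: "\<rho> \<le> r" and xy: "x \<in> ball c \<rho>" "y \<in> ball c \<rho>"
  shows "\<bar>f x - f y\<bar> \<le> (dnorm1 f c + sqrt (real CARD('p)) * L * \<rho>) * norm (x - y)"
proof (rule abs_diff_le_dnorm1_bound[OF convex_ball _ _ xy])
  have sub: "ball c \<rho> \<subseteq> ball c r" using \<rho> by auto
  with f have f\<rho>: "twice_diff_on f (ball c \<rho>)" by (rule twice_diff_on_subset)
  then show "\<forall>z\<in>ball c \<rho>. f differentiable (at z)" by (simp add: twice_diff_on_def)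
  have c: "c \<in> ball c \<rho>" using xy(1) by (auto intro: le_less_trans[OF zero_le_dist])
  show "\<forall>z\<in>ball c \<rho>. dnorm1 f z \<le> dnorm1 f c + sqrt (real CARD('p)) * L * \<rho>"
  proof
    fix z assume z: "z \<in> ball c \<rho>"
    have "norm ((\<chi> i. pd i f z) - (\<chi> i. pd i f c)) \<le> sqrt (real CARD('p)) * L * norm (z - c)"
      by (rule norm_gradient_diff_le[OF convex_ball f\<rho> _ z c]) (use L sub in blast)
    also have "\<dots> \<le> sqrt (real CARD('p)) * L * \<rho>"
    proof (intro mult_left_mono)
      show "norm (z - c) \<le> \<rho>" using z by (simp add: dist_norm norm_minus_commute)
      have "0 \<le> L"
        using L c sub dnorm2_nonneg[of f c] by (meson order_trans subsetD)
      then show "0 \<le> sqrt (real CARD('p)) * L" by simp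
    qed
    finally show "dnorm1 f z \<le> dnorm1 f c + sqrt (real CARD('p)) * L * \<rho>"
      using norm_triangle_sub[of "\<chi> i. pd i f z" "\<chi> i. pd i f c"] by (simp add: dnorm1_eq_norm)
  qed
qed

lemma ennpow_ennreal: "0 \<le> x \<Longrightarrow> ennpow (ennreal x) r = ennreal (x powr r)"
  by (simp add: ennpow_def)

lemma ennpow_top [simp]: "ennpow \<top> r = \<top>"
  by (simp add: ennpow_def)

lemma ennpow_zero [simp]: "ennpow 0 r = 0"
  by (simp add: ennpow_def)

lemma ennpow_eq_0_iff [simp]: "ennpow x r = 0 \<longleftrightarrow> x = 0"
  by (cases x) (auto simp: ennpow_def)

lemma ennpow_ennpow: "ennpow (ennpow x r) s = ennpow x (r * s)"
  by (cases x) (auto simp: ennpow_def powr_powr)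

lemma ennpow_mono:
  assumes "x \<le> y" "0 \<le> r"
  shows "ennpow x r \<le> ennpow y r"
proof (cases y)
  case (real b)
  moreover obtain a where "x = ennreal a" "0 \<le> a" "a \<le> b"
    using assms(1) real by (cases x) (auto simp: top_unique)
  ultimately show ?thesis using assms(2) by (simp add: ennpow_ennreal powr_mono2)
qed simp

lemma borel_measurable_ennpow [measurable]:
  assumes [measurable]: "f \<in> borel_measurable M"
  shows "(\<lambda>x. ennpow (f x) r) \<in> borel_measurable M"
  unfolding ennpow_def by measurable

section \<open>Bounds on the H\<ouml>lder constant\<close>

lemma holder_const_le_lipschitz:
  fixes h :: "real^'p::finite \<Rightarrow> real" and al :: "'p \<Rightarrow> real" and R0 eta :: real
  defines "\<rho> \<equiv> R0 * specnorm (diagm al) powr (1 - eta)"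
  assumes nA: "0 < specnorm (diagm al)" and q: "0 < q" "q \<le> 1" and L: "0 \<le> L"
    and lip: "\<forall>x\<in>ball ths \<rho>. \<forall>y\<in>ball ths \<rho>. \<bar>h x - h y\<bar> \<le> L * norm (x - y)"
  shows "holder_const h Th ths al q eta R0 \<le>
           ennreal (L * specnorm (diagm al) powr q * (2 * \<rho>) powr (1 - q))"
  unfolding holder_const_def Let_def
proof (rule SUP_least, clarify)
  let ?A = "diagm al" and ?nA = "specnorm (diagm al)"
  fix u v assume uv: "u \<noteq> v" "norm (?A *v u) < R0 * ?nA powr (1 - eta)"
    "norm (?A *v v) < R0 * ?nA powr (1 - eta)"
  define t where "t = norm (?A *v u - ?A *v v)"
  define n where "n = norm (u - v)"
  have n0: "0 < n" using uv by (simp add: n_def)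
  have "ths + ?A *v u \<in> ball ths \<rho>" "ths + ?A *v v \<in> ball ths \<rho>"
    using uv by (simp_all add: \<rho>_def dist_norm)
  then have "\<bar>h (ths + ?A *v u) - h (ths + ?A *v v)\<bar> \<le> L * norm ((ths + ?A *v u) - (ths + ?A *v v))"
    using lip by blast
  then have h_le: "\<bar>h (ths + ?A *v u) - h (ths + ?A *v v)\<bar> \<le> L * t"
    by (simp add: t_def)
  have t_le_lin: "t \<le> ?nA * n"
    using norm_mult_vec_le_specnorm[of ?A "u - v"]
    by (simp add: t_def n_def matrix_vector_mult_diff_distrib)
  have t_le_diam: "t \<le> 2 * \<rho>"
    using norm_triangle_ineq4[of "?A *v u" "?A *v v"] uv by (simp add: t_def \<rho>_def)
  \<comment> \<open>interpolate between the two bounds: \<open>t = t\<^sup>q t\<^sup>1\<^sup>-\<^sup>q\<close>\<close>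
  have "t \<le> (?nA * n) powr q * (2 * \<rho>) powr (1 - q)"
  proof (cases "t = 0")
    case False
    then have "t = t powr q * t powr (1 - q)"
      by (simp add: t_def powr_add[symmetric])
    also have "\<dots> \<le> (?nA * n) powr q * (2 * \<rho>) powr (1 - q)"
      using t_le_lin t_le_diam q by (intro mult_mono powr_mono2) (auto simp: t_def)
    finally show ?thesis .
  qed simp
  then have "L * t \<le> (L * ?nA powr q * (2 * \<rho>) powr (1 - q)) * n powr q"
    using L nA n0 by (simp add: powr_mult mult_left_mono mult_ac)
  with h_le n0 show "ennreal (\<bar>h (ths + ?A *v u) - h (ths + ?A *v v)\<bar> / norm (u - v) powr q)
      \<le> ennreal (L * ?nA powr q * (2 * \<rho>) powr (1 - q))"
    by (intro ennreal_leI) (simp add: n_def[symmetric] pos_divide_le_eq)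
qed

lemma lipschitz_holder_scaling_le:
  fixes nA R0 q eta d1 d2 c :: real
  defines "\<rho> \<equiv> R0 * nA powr (1 - eta)"
  assumes nA: "0 < nA" "nA \<le> 1" and R0: "0 < R0" and q: "q \<le> 1" and eta: "0 \<le> eta"
    and d: "0 \<le> d1" "0 \<le> d2" and c: "0 \<le> c"
  shows "(d1 + c * d2 * \<rho>) * nA powr q * (2 * \<rho>) powr (1 - q)
    \<le> (2 * R0) powr (1 - q) * max 1 (c * R0) * nA powr (- (eta * (2 - q))) * (nA * d1 + nA powr 2 * d2)"
proof -
  define E where "E = nA powr (- (eta * (2 - q)))"
  define P where "P = nA powr (1 - eta * (1 - q))"
  have E0: "0 \<le> E" by (simp add: E_def)
  have split: "nA powr q * (2 * \<rho>) powr (1 - q) = (2 * R0) powr (1 - q) * P"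
  proof -
    have "(2 * \<rho>) powr (1 - q) = (2 * R0) powr (1 - q) * nA powr ((1 - eta) * (1 - q))"
      using nA R0 by (simp add: \<rho>_def powr_mult powr_powr mult.assoc)
    moreover have "q + (1 - eta) * (1 - q) = 1 - eta * (1 - q)"
      by (simp add: algebra_simps)
    ultimately show ?thesis
      by (simp add: P_def powr_add[symmetric] mult.left_commute)
  qed
  have P_le: "P \<le> nA * E"
  proof -
    have "P \<le> nA powr (1 + - (eta * (2 - q)))"
      unfolding P_def using nA eta q by (intro powr_mono') (auto simp: algebra_simps)
    then show ?thesis using nA by (simp add: E_def powr_mult_base)
  qed
  have P_eq: "nA powr (1 - eta) * P = nA powr 2 * E"
  proof -
    have "(1 - eta) + (1 - eta * (1 - q)) = 2 + - (eta * (2 - q))"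
      by (simp add: algebra_simps)
    then show ?thesis by (simp add: P_def E_def powr_add[symmetric])
  qed
  have "(d1 + c * d2 * \<rho>) * nA powr q * (2 * \<rho>) powr (1 - q)
      = (2 * R0) powr (1 - q) * (d1 * P + c * R0 * d2 * (nA powr (1 - eta) * P))"
    using split by (simp add: \<rho>_def algebra_simps)
  also have "\<dots> = (2 * R0) powr (1 - q) * (d1 * P + c * R0 * d2 * (nA powr 2 * E))"
    by (simp add: P_eq)
  also have "\<dots> \<le> (2 * R0) powr (1 - q)
      * (max 1 (c * R0) * (d1 * (nA * E)) + max 1 (c * R0) * d2 * (nA powr 2 * E))"
  proof (intro mult_left_mono add_mono)
    have "1 * (d1 * (nA * E)) \<le> max 1 (c * R0) * (d1 * (nA * E))"
      using d nA E0 by (intro mult_right_mono) auto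
    then show "d1 * P \<le> max 1 (c * R0) * (d1 * (nA * E))"
      using mult_left_mono[OF P_le d(1)] by simp
    show "c * R0 * d2 * (nA powr 2 * E) \<le> max 1 (c * R0) * d2 * (nA powr 2 * E)"
      using d E0 by (intro mult_right_mono) auto
  qed simp
  also have "\<dots> = (2 * R0) powr (1 - q) * max 1 (c * R0) * E * (nA * d1 + nA powr 2 * d2)"
    by (simp add: algebra_simps)
  finally show ?thesis by (simp add: E_def)
qed

lemma powr_mult_add_le:
  fixes C u v m :: real
  assumes "0 \<le> C" "0 \<le> u" "0 \<le> v" "0 < m"
  shows "(C * (u + v)) powr m \<le> (2 * C) powr m * (u powr m + v powr m)"
proof -
  have "(u + v) powr m \<le> (2 * max u v) powr m"
    using assms by (intro powr_mono2) auto
  also have "\<dots> = 2 powr m * max u v powr m"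
    using assms by (simp add: powr_mult)
  also have "\<dots> \<le> 2 powr m * (u powr m + v powr m)"
    by (intro mult_left_mono) (auto simp: max_def)
  finally have "C powr m * (u + v) powr m \<le> C powr m * (2 powr m * (u powr m + v powr m))"
    by (rule mult_left_mono) simp
  then show ?thesis
    using assms by (simp add: powr_mult mult_ac)
qed

lemma holder_const_le_hessian_bound:
  fixes h :: "real^'p::finite \<Rightarrow> real" and al :: "'p \<Rightarrow> real" and R0 q d2 :: real
  defines "nA \<equiv> specnorm (diagm al)"
  assumes h: "twice_diff_on h (ball ths R0)" and d2: "\<forall>z\<in>ball ths R0. dnorm2 h z \<le> d2"
    and R0: "0 < R0" and nA: "0 < nA" "nA \<le> 1" and q: "0 < q" "q \<le> 1"
    and eta: "0 \<le> eta" "eta \<le> 1"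
  shows "holder_const h Th ths al q eta R0 \<le> ennreal ((2 * R0) powr (1 - q) *
    max 1 (sqrt (real CARD('p)) * R0) * nA powr (- (eta * (2 - q))) * (nA * dnorm1 h ths + nA powr 2 * d2))"
proof -
  define cp where "cp = sqrt (real CARD('p))"
  define \<rho> where "\<rho> = R0 * nA powr (1 - eta)"
  have "0 \<le> d2"
    using d2 R0 dnorm2_nonneg[of h ths] by (meson centre_in_ball order_trans)
  have "\<rho> \<le> R0"
    using nA eta R0 by (simp add: \<rho>_def mult_left_le powr_le1)
  from lipschitz_on_subball[OF h d2 this]
  have lip: "\<forall>x\<in>ball ths \<rho>. \<forall>y\<in>ball ths \<rho>. \<bar>h x - h y\<bar> \<le> (dnorm1 h ths + cp * d2 * \<rho>) * norm (x - y)"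
    by (simp add: cp_def)
  have L0: "0 \<le> dnorm1 h ths + cp * d2 * \<rho>"
    using \<open>0 \<le> d2\<close> R0 nA by (simp add: \<rho>_def cp_def)
  have "holder_const h Th ths al q eta R0
      \<le> ennreal ((dnorm1 h ths + cp * d2 * \<rho>) * nA powr q * (2 * \<rho>) powr (1 - q))"
    using holder_const_le_lipschitz[OF nA(1)[unfolded nA_def] q L0[unfolded \<rho>_def nA_def]
        lip[unfolded \<rho>_def nA_def]]
    by (simp add: \<rho>_def nA_def)
  also have "\<dots> \<le> ennreal ((2 * R0) powr (1 - q) * max 1 (cp * R0) * nA powr (- (eta * (2 - q))) *
      (nA * dnorm1 h ths + nA powr 2 * d2))"
    using lipschitz_holder_scaling_le[of nA R0 q eta "dnorm1 h ths" d2 cp] nA R0 q eta \<open>0 \<le> d2\<close>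
    by (intro ennreal_leI) (simp add: \<rho>_def cp_def)
  finally show ?thesis by (simp add: cp_def)
qed

lemma holder_const_powr_le:
  fixes h :: "real^'p::finite \<Rightarrow> real" and al :: "'p \<Rightarrow> real" and R0 q m1 :: real
  defines "nA \<equiv> specnorm (diagm al)"
    and "K \<equiv> (2 * ((2 * R0) powr (1 - q) * max 1 (sqrt (real CARD('p)) * R0))) powr m1"
  assumes h: "twice_diff_on h (ball ths R0)" and D: "\<forall>z\<in>ball ths R0. ennreal (dnorm2 h z) \<le> D"
    and R0: "0 < R0" and nA: "0 < nA" "nA \<le> 1" and q: "0 < q" "q \<le> 1"
    and eta: "0 \<le> eta" "eta \<le> 1" and m1: "0 < m1"
  shows "ennpow (holder_const h Th ths al q eta R0) m1
    \<le> ennreal (K * nA powr (- (eta * (2 - q)) * m1)) *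
      (ennreal (nA powr m1 * dnorm1 h ths powr m1) + ennreal (nA powr (2 * m1)) * ennpow D m1)"
proof (cases D)
  case top
  have "0 < K"
    using R0 by (simp add: K_def max_def)
  then show ?thesis
    using top nA by (simp add: ennreal_mult_top)
next
  case (real d2)
  define C where "C = (2 * R0) powr (1 - q) * max 1 (sqrt (real CARD('p)) * R0) * nA powr (- (eta * (2 - q)))"
  have d2: "0 \<le> d2" "\<forall>z\<in>ball ths R0. dnorm2 h z \<le> d2"
    using D real by auto
  have C0: "0 \<le> C" by (simp add: C_def)
  have "ennpow (holder_const h Th ths al q eta R0) m1
      \<le> ennpow (ennreal (C * (nA * dnorm1 h ths + nA powr 2 * d2))) m1"
    using holder_const_le_hessian_bound[OF h d2(2) R0 nA[unfolded nA_def] q eta] m1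
    by (intro ennpow_mono) (simp_all add: C_def nA_def mult.assoc)
  also have "\<dots> = ennreal ((C * (nA * dnorm1 h ths + nA powr 2 * d2)) powr m1)"
    using nA d2 C0 by (intro ennpow_ennreal) simp
  also have "\<dots> \<le> ennreal (K * nA powr (- (eta * (2 - q)) * m1) *
      (nA powr m1 * dnorm1 h ths powr m1 + nA powr (2 * m1) * d2 powr m1))"
  proof (rule ennreal_leI)
    have "(C * (nA * dnorm1 h ths + nA powr 2 * d2)) powr m1
        \<le> (2 * C) powr m1 * ((nA * dnorm1 h ths) powr m1 + (nA powr 2 * d2) powr m1)"
      using nA d2 m1 C0 by (intro powr_mult_add_le) auto
    also have "\<dots> = K * nA powr (- (eta * (2 - q)) * m1) *
        (nA powr m1 * dnorm1 h ths powr m1 + nA powr (2 * m1) * d2 powr m1)"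
      using nA d2 powr_powr[of nA 2 m1]
      by (simp add: C_def K_def powr_mult powr_powr mult_ac)
    finally show "(C * (nA * dnorm1 h ths + nA powr 2 * d2)) powr m1 \<le> \<dots>" .
  qed
  also have "\<dots> = ennreal (K * nA powr (- (eta * (2 - q)) * m1)) *
      (ennreal (nA powr m1 * dnorm1 h ths powr m1) + ennreal (nA powr (2 * m1)) * ennpow D m1)"
    using real nA d2 by (simp add: ennpow_ennreal ennreal_mult ennreal_plus K_def distrib_left)
  finally show ?thesis .
qed

section \<open>H\<ouml>lder's inequality for nonnegative integrals\<close>

lemma Youngs_inequality_scaled:
  fixes x y F G a b :: real
  assumes "0 \<le> x" "0 \<le> y" "0 < F" "0 < G" "0 < a" "0 < b" "a + b = 1"
  shows "x powr a * y powr b \<le> F powr a * G powr b * (a * x / F + b * y / G)"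
proof (cases "x = 0 \<or> y = 0")
  case True
  then show ?thesis using assms by auto
next
  case False
  then have "(x / F) powr a * (y / G) powr b \<le> a * (x / F) + b * (y / G)"
    using Youngs_inequality_0[of a b "x / F" "y / G"] assms by simp
  then have "F powr a * G powr b * ((x / F) powr a * (y / G) powr b)
      \<le> F powr a * G powr b * (a * (x / F) + b * (y / G))"
    by (rule mult_left_mono) simp
  then show ?thesis using assms by (simp add: powr_divide)
qed

lemma ennpow_mult_le_Young:
  fixes x y :: ennreal and F G a b :: real
  assumes "x \<noteq> \<top>" "y \<noteq> \<top>" "0 < F" "0 < G" "0 < a" "0 < b" "a + b = 1"
  shows "ennpow x a * ennpow y b
    \<le> ennreal (F powr a * G powr b) * (ennreal (a / F) * x + ennreal (b / G) * y)"
proof -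
  obtain u v where uv: "x = ennreal u" "0 \<le> u" "y = ennreal v" "0 \<le> v"
    using assms(1,2) by (cases x; cases y) auto
  define \<alpha> \<beta> where "\<alpha> = a / F" and "\<beta> = b / G"
  have "u powr a * v powr b \<le> F powr a * G powr b * (\<alpha> * u + \<beta> * v)"
    using Youngs_inequality_scaled[of u v F G a b] uv assms by (simp add: \<alpha>_def \<beta>_def)
  then have "ennreal (u powr a * v powr b) \<le> ennreal (F powr a * G powr b * (\<alpha> * u + \<beta> * v))"
    by (rule ennreal_leI)
  moreover have "0 \<le> \<alpha>" "0 \<le> \<beta>"
    using assms by (simp_all add: \<alpha>_def \<beta>_def)
  ultimately show ?thesis
    unfolding \<alpha>_def[symmetric] \<beta>_def[symmetric] using uv
    by (simp add: ennpow_ennreal ennreal_mult ennreal_plus)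
qed

lemma nn_integral_Hoelder:
  assumes f: "f \<in> borel_measurable M" and g: "g \<in> borel_measurable M"
    and ab: "0 < a" "0 < b" "a + b = 1"
  shows "(\<integral>\<^sup>+x. ennpow (f x) a * ennpow (g x) b \<partial>M)
          \<le> ennpow (\<integral>\<^sup>+x. f x \<partial>M) a * ennpow (\<integral>\<^sup>+x. g x \<partial>M) b"
proof -
  define F where "F = (\<integral>\<^sup>+x. f x \<partial>M)"
  define G where "G = (\<integral>\<^sup>+x. g x \<partial>M)"
  consider "F = 0 \<or> G = 0" | "F \<noteq> 0" "G \<noteq> 0" "F = \<top> \<or> G = \<top>"
    | Fr Gr where "F = ennreal Fr" "0 < Fr" "G = ennreal Gr" "0 < Gr"
    by (cases F; cases G) (auto simp: le_less)
  then show ?thesis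
  proof cases
    case 1
    then have "AE x in M. ennpow (f x) a * ennpow (g x) b = 0"
      using nn_integral_0_iff_AE[OF f] nn_integral_0_iff_AE[OF g] by (auto simp: F_def G_def)
    then have "(\<integral>\<^sup>+x. ennpow (f x) a * ennpow (g x) b \<partial>M) = (\<integral>\<^sup>+x. 0 \<partial>M)"
      by (rule nn_integral_cong_AE)
    then show ?thesis by simp
  next
    case 2
    then show ?thesis by (auto simp: F_def[symmetric] G_def[symmetric] ennreal_mult_top)
  next
    case 3
    have "AE x in M. f x \<noteq> \<top>" "AE x in M. g x \<noteq> \<top>"
      using nn_integral_PInf_AE[OF f] nn_integral_PInf_AE[OF g] 3 by (auto simp: F_def G_def)
    then have "AE x in M. ennpow (f x) a * ennpow (g x) b
        \<le> ennreal (Fr powr a * Gr powr b) * (ennreal (a / Fr) * f x + ennreal (b / Gr) * g x)"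
      by eventually_elim (use 3 ab in \<open>simp add: ennpow_mult_le_Young\<close>)
    then have "(\<integral>\<^sup>+x. ennpow (f x) a * ennpow (g x) b \<partial>M)
        \<le> (\<integral>\<^sup>+x. ennreal (Fr powr a * Gr powr b) * (ennreal (a / Fr) * f x + ennreal (b / Gr) * g x) \<partial>M)"
      by (rule nn_integral_mono_AE)
    also have "\<dots> = ennreal (Fr powr a * Gr powr b) * (ennreal (a / Fr) * F + ennreal (b / Gr) * G)"
      using f g by (simp add: nn_integral_add nn_integral_cmult F_def G_def)
    also have "ennreal (a / Fr) * F + ennreal (b / Gr) * G = 1"
      using 3 ab by (simp add: ennreal_mult'[symmetric] ennreal_plus[symmetric] del: ennreal_plus)
    finally show ?thesis
      using 3 by (simp add: F_def[symmetric] G_def[symmetric] ennpow_ennreal ennreal_mult)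
  qed
qed

lemma nn_integral_le_Hoelder_majorant:
  assumes F: "F \<in> borel_measurable M" and g: "g \<in> borel_measurable M"
    and ab: "0 < a" "0 < b" "a + b = 1"
    and X: "AE x in M. X x \<le> ennpow (F x) a * ennpow (g x) b"
    and C: "(\<integral>\<^sup>+x. F x \<partial>M) \<le> ennreal C" "0 \<le> C"
  shows "(\<integral>\<^sup>+x. X x \<partial>M) \<le> ennreal (C powr a) * ennpow (\<integral>\<^sup>+x. g x \<partial>M) b"
proof -
  have "(\<integral>\<^sup>+x. X x \<partial>M) \<le> (\<integral>\<^sup>+x. ennpow (F x) a * ennpow (g x) b \<partial>M)"
    using X by (rule nn_integral_mono_AE)
  also have "\<dots> \<le> ennpow (\<integral>\<^sup>+x. F x \<partial>M) a * ennpow (\<integral>\<^sup>+x. g x \<partial>M) b"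
    by (rule nn_integral_Hoelder[OF F g ab])
  also have "\<dots> \<le> ennpow (ennreal C) a * ennpow (\<integral>\<^sup>+x. g x \<partial>M) b"
    using C(1) ab by (intro mult_right_mono ennpow_mono) auto
  finally show ?thesis
    using C(2) by (simp add: ennpow_ennreal)
qed

section \<open>Measurability of derivatives\<close>

lemma LIMSEQ_difference_quotient_pd:
  fixes f :: "real^'p::finite \<Rightarrow> real"
  assumes "f differentiable (at x)" "0 < \<delta>"
  shows "(\<lambda>n. (f (x + (\<delta> / Suc n) *\<^sub>R axis i 1) - f x) / (\<delta> / Suc n)) \<longlonglongrightarrow> pd i f x"
proof -
  have "((\<lambda>t. (f (x + t *\<^sub>R axis i 1) - f x) / t) \<longlongrightarrow> pd i f x) (at 0)"
    using differentiable_imp_has_field_derivative_pd[OF assms(1)]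
    by (simp add: has_field_derivative_iff)
  then have seq: "\<forall>X. (\<forall>n. X n \<in> UNIV - {0}) \<longrightarrow> X \<longlonglongrightarrow> 0 \<longrightarrow>
      ((\<lambda>t. (f (x + t *\<^sub>R axis i 1) - f x) / t) \<circ> X) \<longlonglongrightarrow> pd i f x"
    by (rule iffD1[OF tendsto_at_iff_sequentially])
  have "(\<lambda>n. \<delta> / real (Suc n)) \<longlonglongrightarrow> 0"
    using LIMSEQ_Suc[OF lim_const_over_n[of \<delta>]] by (simp del: of_nat_Suc)
  moreover have "\<forall>n. \<delta> / real (Suc n) \<in> UNIV - {0}"
    using assms(2) by simp
  ultimately have "((\<lambda>t. (f (x + t *\<^sub>R axis i 1) - f x) / t) \<circ> (\<lambda>n. \<delta> / real (Suc n)))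
      \<longlonglongrightarrow> pd i f x"
    using seq by simp
  then show ?thesis
    by (simp only: comp_def)
qed

lemma borel_measurable_pd:
  fixes F :: "'w \<Rightarrow> real^'p::finite \<Rightarrow> real"
  assumes B: "open B" "\<theta> \<in> B" and diff: "\<forall>\<omega>\<in>space M. F \<omega> differentiable (at \<theta>)"
    and meas: "\<forall>\<theta>'\<in>B. (\<lambda>\<omega>. F \<omega> \<theta>') \<in> borel_measurable M"
  shows "(\<lambda>\<omega>. pd i (F \<omega>) \<theta>) \<in> borel_measurable M"
proof -
  obtain e where e: "0 < e" "ball \<theta> e \<subseteq> B" using B openE by blast
  define \<delta> where "\<delta> = e / 2"
  have "\<theta> + (\<delta> / Suc n) *\<^sub>R axis i 1 \<in> B" for n
  proof -
    have "\<delta> / Suc n \<le> \<delta> / 1"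
      using e by (intro divide_left_mono) (auto simp: \<delta>_def)
    moreover have "\<delta> < e" using e by (simp add: \<delta>_def)
    ultimately have "\<delta> / Suc n < e" by simp
    then show ?thesis using e by (auto simp: dist_norm \<delta>_def)
  qed
  with meas B have [measurable]: "(\<lambda>\<omega>. F \<omega> (\<theta> + (\<delta> / Suc n) *\<^sub>R axis i 1)) \<in> borel_measurable M"
    "(\<lambda>\<omega>. F \<omega> \<theta>) \<in> borel_measurable M" for n
    by blast+
  show ?thesis
  proof (rule borel_measurable_LIMSEQ_real)
    show "(\<lambda>\<omega>. (F \<omega> (\<theta> + (\<delta> / Suc n) *\<^sub>R axis i 1) - F \<omega> \<theta>) / (\<delta> / Suc n)) \<in> borel_measurable M"
      for n by measurable
    show "(\<lambda>n. (F \<omega> (\<theta> + (\<delta> / Suc n) *\<^sub>R axis i 1) - F \<omega> \<theta>) / (\<delta> / Suc n)) \<longlonglongrightarrow> pd i (F \<omega>) \<theta>"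
      if "\<omega> \<in> space M" for \<omega>
      using LIMSEQ_difference_quotient_pd[of "F \<omega>" \<theta> \<delta> i] diff that e by (simp add: \<delta>_def)
  qed
qed

lemma borel_measurable_dnorm1:
  fixes F :: "'w \<Rightarrow> real^'p::finite \<Rightarrow> real"
  assumes "open B" "\<theta> \<in> B" "\<forall>\<omega>\<in>space M. F \<omega> differentiable (at \<theta>)"
    "\<forall>\<theta>'\<in>B. (\<lambda>\<omega>. F \<omega> \<theta>') \<in> borel_measurable M"
  shows "(\<lambda>\<omega>. dnorm1 (F \<omega>) \<theta>) \<in> borel_measurable M"
proof -
  have [measurable]: "(\<lambda>\<omega>. pd i (F \<omega>) \<theta>) \<in> borel_measurable M" for i
    using borel_measurable_pd[OF assms] .
  show ?thesis unfolding dnorm1_def by measurable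
qed

lemma borel_measurable_dnorm2:
  fixes F :: "'w \<Rightarrow> real^'p::finite \<Rightarrow> real"
  assumes B: "open B" "\<theta> \<in> B" and diff: "\<forall>\<omega>\<in>space M. twice_diff_on (F \<omega>) B"
    and meas: "\<forall>\<theta>'\<in>B. (\<lambda>\<omega>. F \<omega> \<theta>') \<in> borel_measurable M"
  shows "(\<lambda>\<omega>. dnorm2 (F \<omega>) \<theta>) \<in> borel_measurable M"
proof -
  have "\<forall>\<theta>'\<in>B. (\<lambda>\<omega>. pd i (F \<omega>) \<theta>') \<in> borel_measurable M" for i
    using borel_measurable_pd[OF B(1) _ _ meas] diff by (auto simp: twice_diff_on_def)
  then have [measurable]: "(\<lambda>\<omega>. pd j (pd i (F \<omega>)) \<theta>) \<in> borel_measurable M" for i j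
    using borel_measurable_pd[OF B, of M "\<lambda>\<omega>. pd i (F \<omega>)" j] diff B(2)
    by (auto simp: twice_diff_on_def)
  show ?thesis unfolding dnorm2_def by measurable
qed

lemma continuous_on_dnorm2:
  assumes "thrice_diff_on h B"
  shows "continuous_on B (dnorm2 h)"
proof -
  have "continuous_on B (pd j (pd i h))" for i j
    using assms unfolding thrice_diff_on_def
    by (intro continuous_at_imp_continuous_on ballI differentiable_imp_continuous_within) auto
  then show ?thesis
    unfolding dnorm2_def[abs_def] by (intro continuous_intros)
qed

lemma SUP_dense_subset_eq:
  fixes \<phi> :: "'a::topological_space \<Rightarrow> real"
  assumes \<phi>: "continuous_on B \<phi>" "\<And>x. 0 \<le> \<phi> x" and B: "open B"
    and D: "\<And>X. open X \<Longrightarrow> X \<noteq> {} \<Longrightarrow> \<exists>d\<in>D. d \<in> X"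
  shows "(SUP \<theta>\<in>D \<inter> B. ennreal (\<phi> \<theta>)) = (SUP \<theta>\<in>B. ennreal (\<phi> \<theta>))"
proof (rule antisym)
  show "(SUP \<theta>\<in>D \<inter> B. ennreal (\<phi> \<theta>)) \<le> (SUP \<theta>\<in>B. ennreal (\<phi> \<theta>))"
    by (rule SUP_subset_mono) auto
  show "(SUP \<theta>\<in>B. ennreal (\<phi> \<theta>)) \<le> (SUP \<theta>\<in>D \<inter> B. ennreal (\<phi> \<theta>))"
  proof (rule SUP_least, rule ennreal_le_epsilon)
    fix z e assume z: "z \<in> B" and e: "0 < (e::real)"
    have "open (\<phi> -` {\<phi> z - e <..} \<inter> B)"
      using \<phi>(1) B by (simp add: continuous_on_open_vimage)
    moreover have "z \<in> \<phi> -` {\<phi> z - e <..} \<inter> B" using z e by simp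
    ultimately have "\<exists>d\<in>D. d \<in> \<phi> -` {\<phi> z - e <..} \<inter> B"
      using D by blast
    then obtain d where d: "d \<in> D \<inter> B" "\<phi> z \<le> \<phi> d + e"
      by force
    have "ennreal (\<phi> z) \<le> ennreal (\<phi> d + e)"
      using d(2) by (rule ennreal_leI)
    also have "\<dots> = ennreal (\<phi> d) + ennreal e"
      using e \<phi>(2)[of d] by simp
    also have "\<dots> \<le> (SUP \<theta>\<in>D \<inter> B. ennreal (\<phi> \<theta>)) + ennreal e"
      using d(1) by (intro add_right_mono SUP_upper)
    finally show "ennreal (\<phi> z) \<le> (SUP \<theta>\<in>D \<inter> B. ennreal (\<phi> \<theta>)) + ennreal e" .
  qed
qed

lemma borel_measurable_SUP_dnorm2:
  fixes F :: "'w \<Rightarrow> real^'p::finite \<Rightarrow> real"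
  assumes B: "open B" and diff: "\<forall>\<omega>\<in>space M. thrice_diff_on (F \<omega>) B"
    and meas: "\<forall>\<theta>\<in>B. (\<lambda>\<omega>. F \<omega> \<theta>) \<in> borel_measurable M"
  shows "(\<lambda>\<omega>. SUP \<theta>\<in>B. ennreal (dnorm2 (F \<omega>) \<theta>)) \<in> borel_measurable M"
proof -
  obtain D :: "(real^'p) set" where D: "countable D" "\<And>X. open X \<Longrightarrow> X \<noteq> {} \<Longrightarrow> \<exists>d\<in>D. d \<in> X"
    by (rule countable_dense_setE) blast
  have "(\<lambda>\<omega>. SUP \<theta>\<in>D \<inter> B. ennreal (dnorm2 (F \<omega>) \<theta>)) \<in> borel_measurable M"
    using D(1) borel_measurable_dnorm2[OF B _ _ meas] diff
    by (intro borel_measurable_SUP) (auto simp: thrice_diff_on_imp_twice_diff_on)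
  then show ?thesis
    using diff by (subst (asm) measurable_cong[OF SUP_dense_subset_eq[OF continuous_on_dnorm2 _ B D(2)]]) auto
qed

section \<open>Moment bound for the H\<ouml>lder constant\<close>

lemma thrice_diff_on_AE_modification:
  fixes H :: "'w \<Rightarrow> real^'p::finite \<Rightarrow> real"
  assumes H: "\<forall>\<theta>. (\<lambda>\<omega>. H \<omega> \<theta>) \<in> borel_measurable M"
    and diff: "AE \<omega> in M. thrice_diff_on (H \<omega>) B"
  obtains H' where "\<forall>\<omega>\<in>space M. thrice_diff_on (H' \<omega>) B" "\<forall>\<theta>. (\<lambda>\<omega>. H' \<omega> \<theta>) \<in> borel_measurable M"
    "AE \<omega> in M. H' \<omega> = H \<omega>" "\<And>\<omega>. H' \<omega> = H \<omega> \<or> H' \<omega> = (\<lambda>_. 0)"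
proof -
  obtain N where N: "{\<omega> \<in> space M. \<not> thrice_diff_on (H \<omega>) B} \<subseteq> N" "emeasure M N = 0" "N \<in> sets M"
    using diff by (rule AE_E)
  show ?thesis
  proof (rule that[of "\<lambda>\<omega>. if \<omega> \<in> N then (\<lambda>_. 0) else H \<omega>"])
    show "\<forall>\<omega>\<in>space M. thrice_diff_on (if \<omega> \<in> N then (\<lambda>_. 0) else H \<omega>) B"
      using N(1) by auto
    show "\<forall>\<theta>. (\<lambda>\<omega>. (if \<omega> \<in> N then (\<lambda>_. 0) else H \<omega>) \<theta>) \<in> borel_measurable M"
    proof
      fix \<theta>
      have "(\<lambda>\<omega>. if \<omega> \<in> N then 0 else H \<omega> \<theta>) \<in> borel_measurable M"
        using H N(3) by (intro measurable_If_set) auto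
      then show "(\<lambda>\<omega>. (if \<omega> \<in> N then (\<lambda>_. 0) else H \<omega>) \<theta>) \<in> borel_measurable M"
        by (simp add: if_distrib[of "\<lambda>f. f \<theta>"])
    qed
    have "AE \<omega> in M. \<omega> \<notin> N"
      using N(2,3) by (intro AE_not_in) (simp add: null_sets_def)
    then show "AE \<omega> in M. (if \<omega> \<in> N then (\<lambda>_. 0) else H \<omega>) = H \<omega>"
      by eventually_elim simp
  qed simp
qed

lemma holder_const_powr_majorant:
  fixes H :: "'w \<Rightarrow> real^'p::finite \<Rightarrow> real" and al :: "'p \<Rightarrow> real" and R0 q m1 :: real
  defines "nA \<equiv> specnorm (diagm al)"
    and "K \<equiv> (2 * ((2 * R0) powr (1 - q) * max 1 (sqrt (real CARD('p)) * R0))) powr m1"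
  assumes H: "\<forall>\<theta>. (\<lambda>\<omega>. H \<omega> \<theta>) \<in> borel_measurable M"
    and diff: "AE \<omega> in M. thrice_diff_on (H \<omega>) B" and B: "open B" "ball ths R0 \<subseteq> B"
    and R0: "0 < R0" and nA: "0 < nA" "nA \<le> 1" and q: "0 < q" "q \<le> 1"
    and eta: "0 \<le> eta" "eta \<le> 1" and m1: "0 < m1"
  obtains F where "F \<in> borel_measurable M"
    "AE \<omega> in M. ennpow (holder_const (H \<omega>) Th ths al q eta R0) m1 \<le> F \<omega>"
    "(\<integral>\<^sup>+\<omega>. F \<omega> \<partial>M) \<le> ennreal (K * nA powr (- (eta * (2 - q)) * m1)) *
       ((\<integral>\<^sup>+\<omega>. ennreal (nA powr m1 * dnorm1 (H \<omega>) ths powr m1) \<partial>M) +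
        (\<integral>\<^sup>+\<omega>. ennreal (nA powr (2 * m1)) * ennpow (SUP \<theta>\<in>B. ennreal (dnorm2 (H \<omega>) \<theta>)) m1 \<partial>M))"
proof -
  obtain H' where H': "\<forall>\<omega>\<in>space M. thrice_diff_on (H' \<omega>) B" "\<forall>\<theta>. (\<lambda>\<omega>. H' \<omega> \<theta>) \<in> borel_measurable M"
    "AE \<omega> in M. H' \<omega> = H \<omega>" "\<And>\<omega>. H' \<omega> = H \<omega> \<or> H' \<omega> = (\<lambda>_. 0)"
    using thrice_diff_on_AE_modification[OF H diff] by blast
  have "ths \<in> B" using B R0 by auto
  then have [measurable]: "(\<lambda>\<omega>. dnorm1 (H' \<omega>) ths) \<in> borel_measurable M"
    using borel_measurable_dnorm1[OF B(1), of ths M H'] H'(1,2) by (auto simp: thrice_diff_on_def)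
  have [measurable]: "(\<lambda>\<omega>. SUP \<theta>\<in>B. ennreal (dnorm2 (H' \<omega>) \<theta>)) \<in> borel_measurable M"
    using borel_measurable_SUP_dnorm2[OF B(1) H'(1)] H'(2) by blast
  define Y1 where "Y1 \<omega> = ennreal (nA powr m1 * dnorm1 (H' \<omega>) ths powr m1)" for \<omega>
  define Y2 where "Y2 \<omega> = ennreal (nA powr (2 * m1)) * ennpow (SUP \<theta>\<in>B. ennreal (dnorm2 (H' \<omega>) \<theta>)) m1"
    for \<omega>
  have [measurable]: "Y1 \<in> borel_measurable M" "Y2 \<in> borel_measurable M"
    unfolding Y1_def Y2_def by measurable
  show ?thesis
  proof (rule that[of "\<lambda>\<omega>. ennreal (K * nA powr (- (eta * (2 - q)) * m1)) * (Y1 \<omega> + Y2 \<omega>)"])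
    show "AE \<omega> in M. ennpow (holder_const (H \<omega>) Th ths al q eta R0) m1
        \<le> ennreal (K * nA powr (- (eta * (2 - q)) * m1)) * (Y1 \<omega> + Y2 \<omega>)"
      using H'(3) AE_space
    proof eventually_elim
      case (elim \<omega>)
      then have "thrice_diff_on (H \<omega>) B"
        using H'(1) by metis
      then have "twice_diff_on (H \<omega>) (ball ths R0)"
        using B(2) by (meson twice_diff_on_subset thrice_diff_on_imp_twice_diff_on)
      moreover have "\<forall>z\<in>ball ths R0. ennreal (dnorm2 (H \<omega>) z) \<le> (SUP \<theta>\<in>B. ennreal (dnorm2 (H \<omega>) \<theta>))"
        using B(2) by (auto intro: SUP_upper)
      ultimately show ?case
        using holder_const_powr_le[of "H \<omega>" ths R0] R0 nA q eta m1 elim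
        by (simp add: Y1_def Y2_def nA_def K_def)
    qed
    have "(SUP \<theta>\<in>B. ennreal (dnorm2 (\<lambda>_. 0) \<theta>)) = 0"
      by (cases "B = {}") (simp_all add: dnorm2_def bot_ennreal)
    then have "Y1 \<omega> \<le> ennreal (nA powr m1 * dnorm1 (H \<omega>) ths powr m1)"
      and "Y2 \<omega> \<le> ennreal (nA powr (2 * m1)) * ennpow (SUP \<theta>\<in>B. ennreal (dnorm2 (H \<omega>) \<theta>)) m1" for \<omega>
      using H'(4)[of \<omega>] by (auto simp: Y1_def Y2_def dnorm1_def)
    then show "(\<integral>\<^sup>+\<omega>. ennreal (K * nA powr (- (eta * (2 - q)) * m1)) * (Y1 \<omega> + Y2 \<omega>) \<partial>M)
        \<le> ennreal (K * nA powr (- (eta * (2 - q)) * m1)) *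
          ((\<integral>\<^sup>+\<omega>. ennreal (nA powr m1 * dnorm1 (H \<omega>) ths powr m1) \<partial>M) +
           (\<integral>\<^sup>+\<omega>. ennreal (nA powr (2 * m1)) * ennpow (SUP \<theta>\<in>B. ennreal (dnorm2 (H \<omega>) \<theta>)) m1 \<partial>M))"
      by (simp add: nn_integral_cmult nn_integral_add) (intro mult_left_mono add_mono nn_integral_mono; simp)
  qed measurable
qed

lemma nn_integral_holder_const_moment_le:
  fixes H :: "'w \<Rightarrow> real^'p::finite \<Rightarrow> real" and al :: "'p \<Rightarrow> real" and G :: "'w \<Rightarrow> real"
    and R0 q m1 m2 s :: real
  defines "nA \<equiv> specnorm (diagm al)"
    and "K \<equiv> (2 * ((2 * R0) powr (1 - q) * max 1 (sqrt (real CARD('p)) * R0))) powr m1"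
    and "m \<equiv> m1 * m2 / (q * m1 + m2)"
  assumes H: "\<forall>\<theta>. (\<lambda>\<omega>. H \<omega> \<theta>) \<in> borel_measurable M"
    and diff: "AE \<omega> in M. thrice_diff_on (H \<omega>) B" and B: "open B" "ball ths R0 \<subseteq> B"
    and R0: "0 < R0" and nA: "0 < nA" "nA \<le> 1" and q: "0 < q" "q \<le> 1"
    and eta: "0 \<le> eta" "eta \<le> 1" and m1: "0 < m1" and m2: "0 < m2"
    and G: "G \<in> borel_measurable M"
    and moments: "(\<integral>\<^sup>+\<omega>. ennreal (nA powr m1 * dnorm1 (H \<omega>) ths powr m1) \<partial>M) +
        (\<integral>\<^sup>+\<omega>. ennreal (nA powr (2 * m1)) * ennpow (SUP \<theta>\<in>B. ennreal (dnorm2 (H \<omega>) \<theta>)) m1 \<partial>M)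
        \<le> ennreal s"
    and s: "0 \<le> s"
  shows "(\<integral>\<^sup>+\<omega>. ennpow (holder_const (H \<omega>) Th ths al q eta R0) m * ennreal (G \<omega> powr (q * m)) \<partial>M)
    \<le> ennreal ((K * s) powr (m2 / (q * m1 + m2)) * nA powr (- (eta * (2 - q) * m1 * m2 / (q * m1 + m2)))) *
      ennpow (\<integral>\<^sup>+\<omega>. ennreal (G \<omega> powr m2) \<partial>M) (q * m1 / (q * m1 + m2))"
proof -
  define a where "a = m2 / (q * m1 + m2)"
  define b where "b = q * m1 / (q * m1 + m2)"
  define E where "E = nA powr (- (eta * (2 - q)) * m1)"
  have "0 < q * m1 + m2" using q m1 m2 by (intro add_pos_pos mult_pos_pos)
  then have ab: "0 < a" "0 < b" "a + b = 1"
    using q m1 m2 by (auto simp: a_def b_def add_divide_distrib[symmetric])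
  have KE: "0 \<le> K * E" by (simp add: K_def E_def)
  obtain F where F: "F \<in> borel_measurable M"
    "AE \<omega> in M. ennpow (holder_const (H \<omega>) Th ths al q eta R0) m1 \<le> F \<omega>"
    "(\<integral>\<^sup>+\<omega>. F \<omega> \<partial>M) \<le> ennreal (K * E) *
       ((\<integral>\<^sup>+\<omega>. ennreal (nA powr m1 * dnorm1 (H \<omega>) ths powr m1) \<partial>M) +
        (\<integral>\<^sup>+\<omega>. ennreal (nA powr (2 * m1)) * ennpow (SUP \<theta>\<in>B. ennreal (dnorm2 (H \<omega>) \<theta>)) m1 \<partial>M))"
    using holder_const_powr_majorant[OF H diff B R0 nA[unfolded nA_def] q eta m1, of Th,
        folded nA_def K_def, folded E_def]
    by blast
  have "(\<integral>\<^sup>+\<omega>. F \<omega> \<partial>M) \<le> ennreal (K * E) * ennreal s"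
    using F(3) mult_left_mono[OF moments] by (rule order_trans) simp
  then have F_int: "(\<integral>\<^sup>+\<omega>. F \<omega> \<partial>M) \<le> ennreal (K * E * s)"
    using KE s by (simp add: ennreal_mult)
  have "AE \<omega> in M. ennpow (holder_const (H \<omega>) Th ths al q eta R0) m * ennreal (G \<omega> powr (q * m))
      \<le> ennpow (F \<omega>) a * ennpow (ennreal (G \<omega> powr m2)) b"
    using F(2)
  proof eventually_elim
    case (elim \<omega>)
    have m_eq: "m = m1 * a" "q * (m1 * a) = m2 * b"
      by (simp_all add: m_def a_def b_def)
    have "ennpow (holder_const (H \<omega>) Th ths al q eta R0) m
        = ennpow (ennpow (holder_const (H \<omega>) Th ths al q eta R0) m1) a"
      by (simp add: m_eq ennpow_ennpow)
    also have "\<dots> \<le> ennpow (F \<omega>) a"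
      using elim ab by (intro ennpow_mono) auto
    finally show ?case
      by (intro mult_mono) (simp_all add: m_eq ennpow_ennreal powr_powr)
  qed
  from nn_integral_le_Hoelder_majorant[OF F(1) _ ab this F_int] KE s G
  have "(\<integral>\<^sup>+\<omega>. ennpow (holder_const (H \<omega>) Th ths al q eta R0) m * ennreal (G \<omega> powr (q * m)) \<partial>M)
      \<le> ennreal ((K * E * s) powr a) * ennpow (\<integral>\<^sup>+\<omega>. ennreal (G \<omega> powr m2) \<partial>M) b"
    by simp
  also have "(K * E * s) powr a
      = (K * s) powr (m2 / (q * m1 + m2)) * nA powr (- (eta * (2 - q) * m1 * m2 / (q * m1 + m2)))"
    using nA s by (simp add: E_def K_def a_def powr_mult powr_powr mult_ac)
  finally show ?thesis by (simp add: b_def)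
qed

lemma SUP_finite_add_le_ennreal:
  fixes f g :: "'a \<Rightarrow> ennreal"
  assumes "(SUP x\<in>A. f x) < \<top>" "(SUP x\<in>A. g x) < \<top>"
  obtains s where "0 < s" "\<forall>x\<in>A. f x + g x \<le> ennreal s"
proof
  let ?s = "enn2real (SUP x\<in>A. f x) + enn2real (SUP x\<in>A. g x) + 1"
  show "0 < ?s" by (simp add: add_nonneg_pos)
  show "\<forall>x\<in>A. f x + g x \<le> ennreal ?s"
  proof
    fix x assume "x \<in> A"
    then have "f x + g x \<le> (SUP x\<in>A. f x) + (SUP x\<in>A. g x)"
      by (intro add_mono SUP_upper)
    also have "\<dots> = ennreal (enn2real (SUP x\<in>A. f x)) + ennreal (enn2real (SUP x\<in>A. g x))"
      using assms by simp
    also have "\<dots> \<le> ennreal ?s"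
      by (subst ennreal_plus[symmetric]) (auto intro: ennreal_leI)
    finally show "f x + g x \<le> ennreal ?s" .
  qed
qed

theorem proposition6:
  fixes P :: "'w measure"
    and Th :: "(real^'p::finite) set"
    and ths :: "real^'p"
    and Tset :: "real set"
    and H :: "real \<Rightarrow> 'w \<Rightarrow> real^'p \<Rightarrow> real"
    and xi :: "real \<Rightarrow> 'w \<Rightarrow> 'p \<Rightarrow> real"
    and al :: "real \<Rightarrow> 'p \<Rightarrow> real"
    and q eta R0s m1 :: real
  assumes P: "prob_space P"
    and Th: "bounded Th" "open Th" "ths \<in> Th"
    and Tset: "Tset \<subseteq> {0..}" "\<forall>M. \<exists>T\<in>Tset. T > M"
    and H_meas: "\<forall>T\<in>Tset. \<forall>\<theta>. (\<lambda>\<omega>. H T \<omega> \<theta>) \<in> borel_measurable P"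
    and H_cont: "\<forall>T\<in>Tset. \<forall>\<omega>\<in>space P. continuous_on (closure Th) (H T \<omega>)"
    and xi_meas: "\<forall>T\<in>Tset. \<forall>j. (\<lambda>\<omega>. xi T \<omega> j) \<in> borel_measurable P"
    and xi_pos: "\<forall>T\<in>Tset. \<forall>\<omega>\<in>space P. \<forall>j. xi T \<omega> j > 0"
    and al_nz: "\<forall>T\<in>Tset. \<forall>j. al T j \<noteq> 0"
    and al_lim: "\<forall>\<epsilon>>0. \<exists>T0. \<forall>T\<in>Tset. T \<ge> T0 \<longrightarrow> specnorm (diagm (al T)) < \<epsilon>"
    and q: "0 < q" "q \<le> 1"
    and eta: "0 < eta" "eta \<le> 1"
    and R0s: "R0s > 0"
    and m1: "m1 > 0"
    and A12_i: "\<forall>T\<in>Tset. AE \<omega> in P.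
                  thrice_diff_on (H T \<omega>) {\<theta>\<in>Th. dist \<theta> ths < R0s}"
    and A12_ii: "(SUP T\<in>Tset. \<integral>\<^sup>+ \<omega>. ennreal
                    (specnorm (diagm (al T)) powr m1 * dnorm1 (H T \<omega>) ths powr m1) \<partial>P) < \<top>"
    and A12_iii: "(SUP T\<in>Tset. \<integral>\<^sup>+ \<omega>. ennreal (specnorm (diagm (al T)) powr (2 * m1)) *
                    ennpow (SUP \<theta>\<in>{\<theta>\<in>Th. dist \<theta> ths < R0s}. ennreal (dnorm2 (H T \<omega>) \<theta>)) m1
                    \<partial>P) < \<top>"
    and A12_iv: "(SUP T\<in>Tset. \<integral>\<^sup>+ \<omega>. ennreal (specnorm (diagm (al T)) powr (2 * m1)) *
                    ennpow (SUP \<theta>\<in>{\<theta>\<in>Th. dist \<theta> ths < R0s}. ennreal (dnorm3 (H T \<omega>) \<theta>)) m1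
                    \<partial>P) < \<top>"
  shows "\<forall>m2>0. \<exists>R0>0. \<exists>K>0. \<forall>T\<in>Tset. specnorm (diagm (al T)) \<le> 1 \<longrightarrow>
           (let m = m1 * m2 / (q * m1 + m2) in
            (\<integral>\<^sup>+ \<omega>. ennpow (holder_const (H T \<omega>) Th ths (al T) q eta R0) m *
                     ennreal (specnorm (G00 ths (al T) (xi T \<omega>) q) powr (q * m)) \<partial>P))
           \<le> ennreal (K * specnorm (diagm (al T)) powr (- (eta * (2 - q) * m1 * m2 / (q * m1 + m2)))) *
             ennpow (\<integral>\<^sup>+ \<omega>. ennreal (specnorm (G00 ths (al T) (xi T \<omega>) q) powr m2) \<partial>P)
                    (q * m1 / (q * m1 + m2))"
proof (intro allI impI)
  fix m2 :: real assume m2: "0 < m2"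
  define B where "B = {\<theta>\<in>Th. dist \<theta> ths < R0s}"
  have "B = Th \<inter> ball ths R0s"
    by (auto simp: B_def dist_commute)
  with Th(2) have "open B" by auto
  obtain r where "0 < r" "ball ths r \<subseteq> Th"
    using Th(2,3) openE by blast
  then obtain R0 where R0: "0 < R0" "ball ths R0 \<subseteq> B"
    using R0s by (intro that[of "min r R0s"]) (auto simp: B_def dist_commute)
  obtain s where s: "0 < s" "\<forall>T\<in>Tset.
      (\<integral>\<^sup>+\<omega>. ennreal (specnorm (diagm (al T)) powr m1 * dnorm1 (H T \<omega>) ths powr m1) \<partial>P) +
      (\<integral>\<^sup>+\<omega>. ennreal (specnorm (diagm (al T)) powr (2 * m1)) *
         ennpow (SUP \<theta>\<in>B. ennreal (dnorm2 (H T \<omega>) \<theta>)) m1 \<partial>P) \<le> ennreal s"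
    using SUP_finite_add_le_ennreal[OF A12_ii A12_iii[folded B_def]] by blast
  define K where "K = ((2 * ((2 * R0) powr (1 - q) * max 1 (sqrt (real CARD('p)) * R0))) powr m1 * s)
    powr (m2 / (q * m1 + m2))"
  have "0 < K"
    using R0 s by (simp add: K_def max_def)
  show "\<exists>R0>0. \<exists>K>0. \<forall>T\<in>Tset. specnorm (diagm (al T)) \<le> 1 \<longrightarrow>
           (let m = m1 * m2 / (q * m1 + m2) in
            (\<integral>\<^sup>+ \<omega>. ennpow (holder_const (H T \<omega>) Th ths (al T) q eta R0) m *
                     ennreal (specnorm (G00 ths (al T) (xi T \<omega>) q) powr (q * m)) \<partial>P))
           \<le> ennreal (K * specnorm (diagm (al T)) powr (- (eta * (2 - q) * m1 * m2 / (q * m1 + m2)))) *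
             ennpow (\<integral>\<^sup>+ \<omega>. ennreal (specnorm (G00 ths (al T) (xi T \<omega>) q) powr m2) \<partial>P)
                    (q * m1 / (q * m1 + m2))"
    by (rule exI[of _ R0], intro conjI R0(1) exI[of _ K] \<open>0 < K\<close> ballI impI, unfold Let_def K_def,
        intro nn_integral_holder_const_moment_le[OF _ _ \<open>open B\<close> R0(2,1) specnorm_diagm_pos _ q _ eta(2) m1 m2]
          borel_measurable_specnorm_G00)
       (use H_meas A12_i[folded B_def] s al_nz xi_meas eta(1) in \<open>auto simp: less_imp_le\<close>)
qed

end
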